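(* Let $I$ be an index set and $(X_i)_{i\in I}$ topological spaces. Then $\prod_{i\in I}X_i$ is a Baire space if and only if $\prod_{i\in I}\mathcal K(X_i)$ is a Baire space (both with the product topology).
   Context: A topological space is a Baire space if every countable intersection of dense open subsets is dense. Krom space: for a space $X$ with topology $\tau$, let $\downarrow\tau^{\omega}$ be the set of sequences $f=(f(0),f(1),\dots)$ of nonempty open subsets of $X$ with $f(k+1)\subseteq f(k)$ for all $k$, and for $n\ge1$ let $\downarrow\tau^{n}$ be the set of such decreasing finite sequences of length $n$. $\mathcal K(X)=\{f\in\downarrow\tau^{\omega}:\bigcap_n f(n)\neq\emptyset\}$, topologized as a subspace of $\tau^{\omega}$ where $\tau$ carries the discrete topology; a base consists of the sets $[h]=\{g\in\mathcal K(X): g(k)=h(k)\text{ for all }k<n\}$ for $h\in\downarrow\tau^{n}$, $n\ge1$. *)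

theory Defs
  imports "HOL-Analysis.Analysis"
begin

definition baire_space :: "'a topology \<Rightarrow> bool" where
  "baire_space X \<longleftrightarrow>
     (\<forall>\<U>. countable \<U> \<and> (\<forall>U\<in>\<U>. openin X U \<and> X closure_of U = topspace X)
           \<longrightarrow> X closure_of (topspace X \<inter> \<Inter>\<U>) = topspace X)"

definition krom_carrier :: "'a topology \<Rightarrow> (nat \<Rightarrow> 'a set) set" where
  "krom_carrier X = {f. (\<forall>k. openin X (f k) \<and> f k \<noteq> {} \<and> f (Suc k) \<subseteq> f k)
                         \<and> (\<Inter>n. f n) \<noteq> {}}"

definition krom_space :: "'a topology \<Rightarrow> (nat \<Rightarrow> 'a set) topology" where
  "krom_space X = subtopology
     (product_topology (\<lambda>n. discrete_topology {U. openin X U}) UNIV) (krom_carrier X)"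

end

theory Submission
  imports Defs
begin

text \<open>A basic open set of the Krom product is coded by a condition (g, J, N): all f agreeing
  with g on the finitely many coordinates J below level N. Its shadow is the open box of points x
  with x i \<in> g i k for i \<in> J and k < N. A condition can be refined so that its shadow enters a
  given nonempty open set and, at the same time, its cylinder enters a given dense open set.

  If the Krom product is Baire and the D n are dense open in the product of the X i, the points
  having a cylinder whose shadow lies in D n form dense open sets; for g in all of them, any x
  with x i \<in> g i k for all i and k lies in every D n.

  Conversely, for dense open E n in the Krom product, Zorn's lemma gives maximal families of
  refinements with cylinders in E n and pairwise disjoint shadows. Iterating them yields a tree
  whose levels have shadows dense below the root. A point x of the product in the union of every
  level selects a unique branch; as x lies in all shadows along it, the branch has a limit in the
  Krom product, and this limit lies in every E n.\<close>

lemma baire_space_iff_open_meets_Inter: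
  fixes X :: "'a topology"
  shows "baire_space X \<longleftrightarrow>
     (\<forall>(D :: nat \<Rightarrow> 'a set) V. (\<forall>n. openin X (D n) \<and> X closure_of D n = topspace X) \<longrightarrow>
            openin X V \<longrightarrow> V \<noteq> {} \<longrightarrow> V \<inter> (\<Inter>n. D n) \<noteq> {})"
    (is "_ \<longleftrightarrow> ?meets")
proof
  assume "baire_space X"
  show ?meets
  proof (intro allI impI)
    fix D :: "nat \<Rightarrow> 'a set" and V
    assume D: "\<forall>n. openin X (D n) \<and> X closure_of D n = topspace X"
      and V: "openin X V" "V \<noteq> {}"
    have "countable (range D)"
      by simp
    then have "X closure_of (topspace X \<inter> \<Inter>(range D)) = topspace X"
      using \<open>baire_space X\<close> D unfolding baire_space_def by auto
    then show "V \<inter> (\<Inter>n. D n) \<noteq> {}"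
      using V unfolding dense_intersects_open by blast
  qed
next
  assume meets: ?meets
  show "baire_space X"
    unfolding baire_space_def
  proof (intro allI impI)
    fix \<U> assume \<U>: "countable \<U> \<and> (\<forall>U\<in>\<U>. openin X U \<and> X closure_of U = topspace X)"
    show "X closure_of (topspace X \<inter> \<Inter>\<U>) = topspace X"
    proof (cases "\<U> = {}")
      case False
      have range: "range (from_nat_into \<U>) = \<U>"
        using \<U> False by (simp add: range_from_nat_into)
      show ?thesis
        unfolding dense_intersects_open
      proof (intro allI impI)
        fix V assume V: "openin X V \<and> V \<noteq> {}"
        have "V \<inter> (\<Inter>n. from_nat_into \<U> n) \<noteq> {}"
          using \<U> V meets from_nat_into[OF False] by blast
        then have "V \<inter> \<Inter>\<U> \<noteq> {}"
          by (simp add: range)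
        then show "(topspace X \<inter> \<Inter>\<U>) \<inter> V \<noteq> {}"
          using V openin_subset by blast
      qed
    qed simp
  qed
qed

lemma baire_space_meets_Inter_dense_in_open:
  fixes D :: "nat \<Rightarrow> 'a set"
  assumes "baire_space X" "openin X L" "L \<noteq> {}" "\<And>n. openin X (D n)"
    and dense: "\<And>n W. openin X W \<Longrightarrow> W \<noteq> {} \<Longrightarrow> W \<subseteq> L \<Longrightarrow> W \<inter> D n \<noteq> {}"
  shows "L \<inter> (\<Inter>n. D n) \<noteq> {}"
proof -
  define D' where "D' n = D n \<union> (topspace X - X closure_of L)" for n
  have "openin X (D' n)" for n
    unfolding D'_def using assms(4) by (blast intro: openin_diff closedin_closure_of)
  moreover have "X closure_of D' n = topspace X" for n
    unfolding dense_intersects_open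
  proof (intro allI impI)
    fix U assume U: "openin X U \<and> U \<noteq> {}"
    show "D' n \<inter> U \<noteq> {}"
    proof (cases "U \<subseteq> X closure_of L")
      case True
      then have "U \<inter> L \<noteq> {}"
        using U openin_Int_closure_of_eq_empty[of X U L] by blast
      then show ?thesis
        using dense[of "U \<inter> L" n] U \<open>openin X L\<close> unfolding D'_def by blast
    next
      case False
      then show ?thesis
        using U openin_subset unfolding D'_def by blast
    qed
  qed
  ultimately have "L \<inter> (\<Inter>n. D' n) \<noteq> {}"
    using assms(1)[unfolded baire_space_iff_open_meets_Inter, rule_format, of D' L] assms(2,3)
    by blast
  moreover have "L \<inter> (\<Inter>n. D' n) \<subseteq> L \<inter> (\<Inter>n. D n)"
    using closure_of_subset[OF openin_subset[OF \<open>openin X L\<close>]] unfolding D'_def by blast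
  ultimately show ?thesis by blast
qed

lemma exists_maximal_disjoint_subfamily:
  "\<exists>M\<subseteq>C. disjoint_family_on f M \<and> (\<forall>c\<in>C. f c \<noteq> {} \<longrightarrow> (\<exists>m\<in>M. f c \<inter> f m \<noteq> {}))"
proof -
  define \<A> where "\<A> = {M. M \<subseteq> C \<and> disjoint_family_on f M}"
  have "\<Union>\<C> \<in> \<A>" if \<C>: "\<C> \<in> chains \<A>" for \<C>
  proof -
    have "f a \<inter> f b = {}" if ab: "a \<in> \<Union>\<C>" "b \<in> \<Union>\<C>" "a \<noteq> b" for a b
    proof -
      obtain Ma Mb where "Ma \<in> \<C>" "Mb \<in> \<C>" "a \<in> Ma" "b \<in> Mb"
        using ab(1,2) by blast
      moreover have "Ma \<subseteq> Mb \<or> Mb \<subseteq> Ma"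
        using \<C> \<open>Ma \<in> \<C>\<close> \<open>Mb \<in> \<C>\<close> by (simp add: chains_def chain_subset_def)
      moreover have "disjoint_family_on f Ma" "disjoint_family_on f Mb"
        using \<C> \<open>Ma \<in> \<C>\<close> \<open>Mb \<in> \<C>\<close> by (auto simp: chains_def \<A>_def)
      ultimately show ?thesis
        using \<open>a \<noteq> b\<close> unfolding disjoint_family_on_def by blast
    qed
    moreover have "\<Union>\<C> \<subseteq> C"
      using \<C> by (auto simp: chains_def \<A>_def)
    ultimately show ?thesis
      by (auto simp: \<A>_def disjoint_family_on_def)
  qed
  then obtain M where M: "M \<in> \<A>" and maximal: "\<And>M'. M' \<in> \<A> \<Longrightarrow> M \<subseteq> M' \<Longrightarrow> M' = M"
    using Zorn_Lemma[of \<A>] by blast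
  have "\<exists>m\<in>M. f c \<inter> f m \<noteq> {}" if "c \<in> C" "f c \<noteq> {}" for c
  proof (rule ccontr)
    assume disjoint: "\<not> (\<exists>m\<in>M. f c \<inter> f m \<noteq> {})"
    then have "insert c M \<in> \<A>"
      using M that(1) by (auto simp: \<A>_def disjoint_family_on_def)
    then have "c \<in> M"
      using maximal[of "insert c M"] by blast
    then show False
      using disjoint \<open>f c \<noteq> {}\<close> by blast
  qed
  then show ?thesis
    using M unfolding \<A>_def by blast
qed

section \<open>Krom spaces\<close>

lemma topspace_krom_space [simp]: "topspace (krom_space X) = krom_carrier X"
  by (auto simp: krom_space_def krom_carrier_def)

lemma krom_carrierI:
  assumes "\<And>k. openin X (f k)" "\<And>k. f (Suc k) \<subseteq> f k" "\<And>k. z \<in> f k"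
  shows "f \<in> krom_carrier X"
  using assms unfolding krom_carrier_def by blast

lemma krom_carrier_truncate:
  assumes "f \<in> krom_carrier X" "openin X V" "z \<in> V" "\<And>k. k < N \<Longrightarrow> V \<subseteq> f k"
  shows "(\<lambda>k. if k < N then f k else V) \<in> krom_carrier X"
  using assms by (intro krom_carrierI[where z = z]) (auto simp: krom_carrier_def)

lemma openin_krom_prefix:
  assumes "f \<in> krom_carrier X"
  shows "openin (krom_space X) {f' \<in> krom_carrier X. \<forall>k<N. f' k = f k}"
proof -
  define S where "S k = (if k < N then {f k} else {V. openin X V})" for k
  have "openin (product_topology (\<lambda>n. discrete_topology {V. openin X V}) UNIV) (Pi\<^sub>E UNIV S)"
    unfolding openin_PiE_gen
    using assms by (auto intro: finite_subset[of _ "{..<N}"] simp: S_def krom_carrier_def)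
  moreover have "f' \<in> Pi\<^sub>E UNIV S \<longleftrightarrow> (\<forall>k<N. f' k = f k)" if "f' \<in> krom_carrier X" for f'
    using that unfolding krom_carrier_def by (simp add: PiE_iff S_def)
  then have "{f' \<in> krom_carrier X. \<forall>k<N. f' k = f k} = Pi\<^sub>E UNIV S \<inter> krom_carrier X"
    by blast
  ultimately show ?thesis
    unfolding krom_space_def openin_subtopology by blast
qed

lemma krom_prefix_subset_openin:
  assumes "openin (krom_space X) U" "f \<in> U"
  shows "\<exists>N. {f' \<in> krom_carrier X. \<forall>k<N. f' k = f k} \<subseteq> U"
proof -
  obtain T where T: "openin (product_topology (\<lambda>n. discrete_topology {V. openin X V}) UNIV) T"
    and U: "U = T \<inter> krom_carrier X"
    using assms(1) by (metis krom_space_def openin_subtopology)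
  have "f \<in> T"
    using assms(2) U by blast
  then obtain S where S: "finite {k \<in> UNIV. S k \<noteq> topspace (discrete_topology {V. openin X V})}"
      "f \<in> Pi\<^sub>E UNIV S" "Pi\<^sub>E UNIV S \<subseteq> T"
    using T unfolding openin_product_topology_alt by blast
  then obtain N where N: "\<And>k. S k \<noteq> {V. openin X V} \<Longrightarrow> k < N"
    using finite_nat_set_iff_bounded
    by (metis (mono_tags, lifting) UNIV_I mem_Collect_eq topspace_discrete_topology)
  have "f' \<in> U" if f': "f' \<in> krom_carrier X" "\<forall>k<N. f' k = f k" for f'
  proof -
    have "f' k \<in> S k" for k
    proof (cases "k < N")
      case True
      then show ?thesis
        using f'(2) S(2) by auto
    next
      case False
      then have "S k = {V. openin X V}"
        using N by blast
      then show ?thesis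
        using f'(1) by (simp add: krom_carrier_def)
    qed
    then have "f' \<in> Pi\<^sub>E UNIV S"
      by (simp add: PiE_iff)
    then show ?thesis
      using S(3) f'(1) unfolding U by blast
  qed
  then show ?thesis
    by blast
qed

lemma openin_krom_space:
  "openin (krom_space X) U \<longleftrightarrow>
     U \<subseteq> krom_carrier X \<and> (\<forall>f\<in>U. \<exists>N. {f' \<in> krom_carrier X. \<forall>k<N. f' k = f k} \<subseteq> U)"
proof
  assume "openin (krom_space X) U"
  then show "U \<subseteq> krom_carrier X \<and> (\<forall>f\<in>U. \<exists>N. {f' \<in> krom_carrier X. \<forall>k<N. f' k = f k} \<subseteq> U)"
    using krom_prefix_subset_openin openin_subset by fastforce
next
  assume "U \<subseteq> krom_carrier X \<and> (\<forall>f\<in>U. \<exists>N. {f' \<in> krom_carrier X. \<forall>k<N. f' k = f k} \<subseteq> U)"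
  then show "openin (krom_space X) U"
    using openin_krom_prefix by (subst openin_subopen) blast
qed

section \<open>Conditions and their refinements\<close>

record ('i, 'a) condition =
  gen :: "'i \<Rightarrow> nat \<Rightarrow> 'a set"
  supp :: "'i set"
  depth :: nat

definition refines :: "('i, 'a) condition \<Rightarrow> ('i, 'a) condition \<Rightarrow> bool" where
  "refines q p \<longleftrightarrow> supp p \<subseteq> supp q \<and> depth p < depth q \<and>
     (\<forall>i\<in>supp p. \<forall>k<depth p. gen q i k = gen p i k)"

lemma refines_chain_mono:
  assumes chain: "\<And>n. refines (b (Suc n)) (b n)" and "m \<le> n"
  shows "supp (b m) \<subseteq> supp (b n) \<and> depth (b m) \<le> depth (b n) \<and>
    (\<forall>i\<in>supp (b m). \<forall>k<depth (b m). gen (b n) i k = gen (b m) i k)"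
  using \<open>m \<le> n\<close>
proof (induction n rule: dec_induct)
  case (step n)
  then show ?case
    using chain[of n] unfolding refines_def by fastforce
qed simp

lemma refines_chain_depth:
  assumes "\<And>n. refines (b (Suc n)) (b n)"
  shows "n \<le> depth (b n)"
proof (induction n)
  case (Suc n)
  then show ?case
    using assms[of n] unfolding refines_def by simp
qed simp

lemma refines_chain_deep:
  assumes chain: "\<And>n. refines (b (Suc n)) (b n)" and "i \<in> supp (b m)"
  shows "\<exists>n. i \<in> supp (b n) \<and> k < depth (b n)"
proof (intro exI conjI)
  show "i \<in> supp (b (m + Suc k))"
    using refines_chain_mono[of b m "m + Suc k", OF chain] assms(2) by auto
  show "k < depth (b (m + Suc k))"
    using refines_chain_depth[of b "m + Suc k", OF chain] by simp
qed

definition chain_limit :: "(nat \<Rightarrow> ('i, 'a) condition) \<Rightarrow> 'i \<Rightarrow> nat \<Rightarrow> 'a set" where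
  "chain_limit b i = (if \<exists>m. i \<in> supp (b m)
     then (\<lambda>k. gen (b (SOME n. i \<in> supp (b n) \<and> k < depth (b n))) i k) else gen (b 0) i)"

lemma chain_limit_eq:
  assumes chain: "\<And>n. refines (b (Suc n)) (b n)" and m: "i \<in> supp (b m)" "k < depth (b m)"
  shows "chain_limit b i k = gen (b m) i k"
proof -
  define n where "n = (SOME n. i \<in> supp (b n) \<and> k < depth (b n))"
  have n: "i \<in> supp (b n)" "k < depth (b n)"
    using someI_ex[OF refines_chain_deep[of b, OF chain m(1)]] unfolding n_def by blast+
  have "chain_limit b i k = gen (b n) i k"
    using m(1) unfolding chain_limit_def n_def by auto
  also have "\<dots> = gen (b (max m n)) i k"
    using refines_chain_mono[of b n "max m n", OF chain] n by simp
  also have "\<dots> = gen (b m) i k"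
    using refines_chain_mono[of b m "max m n", OF chain] m by simp
  finally show ?thesis .
qed

context
  fixes X :: "'i \<Rightarrow> 'a topology" and I :: "'i set"
begin

abbreviation krom_product :: "('i \<Rightarrow> nat \<Rightarrow> 'a set) topology" where
  "krom_product \<equiv> product_topology (\<lambda>i. krom_space (X i)) I"

definition admissible :: "('i, 'a) condition \<Rightarrow> bool" where
  "admissible q \<longleftrightarrow> gen q \<in> topspace krom_product \<and> finite (supp q) \<and> supp q \<subseteq> I"

definition cylinder :: "('i, 'a) condition \<Rightarrow> ('i \<Rightarrow> nat \<Rightarrow> 'a set) set" where
  "cylinder q = {f \<in> topspace krom_product. \<forall>i\<in>supp q. \<forall>k<depth q. f i k = gen q i k}"

definition shadow :: "('i, 'a) condition \<Rightarrow> ('i \<Rightarrow> 'a) set" where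
  "shadow q = {x \<in> topspace (product_topology X I). \<forall>i\<in>supp q. \<forall>k<depth q. x i \<in> gen q i k}"

lemma krom_product_point:
  assumes "g \<in> topspace krom_product"
  obtains x where "x \<in> topspace (product_topology X I)" "\<And>i k. i \<in> I \<Longrightarrow> x i \<in> g i k"
proof
  have g: "g i \<in> krom_carrier (X i)" if "i \<in> I" for i
    using assms that by (simp add: PiE_iff)
  define x where "x = (\<lambda>i\<in>I. SOME z. \<forall>k. z \<in> g i k)"
  show x_in: "x i \<in> g i k" if "i \<in> I" for i k
  proof -
    have "\<exists>z. \<forall>k. z \<in> g i k"
      using g[OF that] unfolding krom_carrier_def by blast
    then have "\<forall>k. (SOME z. \<forall>k. z \<in> g i k) \<in> g i k"
      by (rule someI_ex)
    then show ?thesis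
      using that by (simp add: x_def)
  qed
  have "x i \<in> topspace (X i)" if "i \<in> I" for i
  proof -
    have "openin (X i) (g i 0)"
      using g[OF that] by (simp add: krom_carrier_def)
    then show ?thesis
      using x_in[OF that, of 0] openin_subset by blast
  qed
  then show "x \<in> topspace (product_topology X I)"
    unfolding x_def by (simp add: PiE_iff)
qed

lemma shadowI:
  assumes "admissible q" "x \<in> topspace (product_topology X I)" "\<And>i k. i \<in> I \<Longrightarrow> x i \<in> gen q i k"
  shows "x \<in> shadow q"
  using assms unfolding admissible_def shadow_def by blast

lemma shadow_nonempty: "admissible q \<Longrightarrow> shadow q \<noteq> {}"
  by (metis admissible_def empty_iff krom_product_point shadowI)

lemma openin_shadow:
  assumes "admissible q"
  shows "openin (product_topology X I) (shadow q)"
proof -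
  define S where "S i = (\<Inter>k\<in>{k. k < depth q \<and> i \<in> supp q}. gen q i k) \<inter> topspace (X i)" for i
  have "shadow q = Pi\<^sub>E I S"
    using assms unfolding shadow_def S_def admissible_def by (auto simp: PiE_iff extensional_def)
  moreover have "openin (X i) (S i)" if "i \<in> I" for i
    using assms that unfolding S_def admissible_def by (auto simp: PiE_iff krom_carrier_def)
  then have "openin (product_topology X I) (Pi\<^sub>E I S)"
    unfolding openin_PiE_gen
    using assms unfolding admissible_def by (auto intro: finite_subset[of _ "supp q"] simp: S_def)
  ultimately show ?thesis
    by simp
qed

lemma openin_cylinder:
  assumes "admissible q"
  shows "openin krom_product (cylinder q)"
proof -
  define S where "S i = {f \<in> krom_carrier (X i). \<forall>k<depth q. i \<in> supp q \<longrightarrow> f k = gen q i k}" for i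
  have "cylinder q = Pi\<^sub>E I S"
    using assms unfolding cylinder_def S_def admissible_def by (auto simp: PiE_iff extensional_def)
  moreover have "openin (krom_space (X i)) (S i)" for i
    unfolding openin_krom_space S_def by (intro conjI ballI exI[of _ "depth q"]) auto
  then have "openin krom_product (Pi\<^sub>E I S)"
    unfolding openin_PiE_gen
    using assms unfolding admissible_def by (auto intro: finite_subset[of _ "supp q"] simp: S_def)
  ultimately show ?thesis
    by simp
qed

lemma gen_in_cylinder: "admissible q \<Longrightarrow> gen q \<in> cylinder q"
  by (simp add: admissible_def cylinder_def)

lemma cylinder_subset_openin:
  assumes "openin krom_product U" "g \<in> U"
  obtains q where "admissible q" "gen q = g" "cylinder q \<subseteq> U"
proof -
  obtain V where V: "finite {i \<in> I. V i \<noteq> krom_carrier (X i)}"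
      "\<And>i. i \<in> I \<Longrightarrow> openin (krom_space (X i)) (V i)" "g \<in> Pi\<^sub>E I V" "Pi\<^sub>E I V \<subseteq> U"
    using assms unfolding openin_product_topology_alt by force
  define J where "J = {i \<in> I. V i \<noteq> krom_carrier (X i)}"
  have "\<forall>i\<in>J. \<exists>N. {f \<in> krom_carrier (X i). \<forall>k<N. f k = g i k} \<subseteq> V i"
    using V(2,3) unfolding J_def openin_krom_space by (auto simp: PiE_iff)
  then obtain N where N: "\<forall>i\<in>J. {f \<in> krom_carrier (X i). \<forall>k<N i. f k = g i k} \<subseteq> V i"
    by (rule bchoice[elim_format]) blast
  define q where "q = \<lparr>gen = g, supp = J, depth = \<Sum>i\<in>J. N i\<rparr>"
  have "admissible q"
    using V(1,3) assms openin_subset unfolding q_def J_def admissible_def by fastforce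
  moreover have "cylinder q \<subseteq> Pi\<^sub>E I V"
  proof
    fix f assume f: "f \<in> cylinder q"
    have "f i \<in> V i" if "i \<in> I" for i
    proof (cases "i \<in> J")
      case True
      have "N i \<le> depth q"
        using V(1) True unfolding q_def J_def by (simp add: member_le_sum)
      then have "f i \<in> {f \<in> krom_carrier (X i). \<forall>k<N i. f k = g i k}"
        using f True that unfolding cylinder_def q_def by (auto simp: PiE_iff)
      then show ?thesis
        using N True by blast
    next
      case False
      then show ?thesis
        using f that unfolding cylinder_def J_def by (auto simp: PiE_iff)
    qed
    then show "f \<in> Pi\<^sub>E I V"
      using f unfolding cylinder_def by (auto simp: PiE_iff)
  qed
  ultimately show ?thesis
    using that V(4) unfolding q_def by auto
qed

lemma admissible_gen_update:
  "admissible q \<Longrightarrow> f \<in> cylinder q \<Longrightarrow> admissible (q\<lparr>gen := f\<rparr>)"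
  by (simp add: admissible_def cylinder_def)

lemma shadow_gen_update: "f \<in> cylinder q \<Longrightarrow> shadow (q\<lparr>gen := f\<rparr>) = shadow q"
  by (simp add: shadow_def cylinder_def)

lemma shadow_refines: "refines q p \<Longrightarrow> shadow q \<subseteq> shadow p"
  unfolding refines_def shadow_def by fastforce

lemma refine_into_box:
  assumes p: "admissible p"
    and U: "finite {i \<in> I. U i \<noteq> topspace (X i)}" "\<And>i. i \<in> I \<Longrightarrow> openin (X i) (U i)"
      "y \<in> Pi\<^sub>E I U" "Pi\<^sub>E I U \<subseteq> shadow p"
  obtains q where "admissible q" "refines q p" "shadow q \<subseteq> Pi\<^sub>E I U"
proof -
  have U_sub: "U i \<subseteq> gen p i k" if "i \<in> supp p" "k < depth p" for i k
  proof
    fix z assume "z \<in> U i"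
    moreover have "i \<in> I"
      using p that(1) unfolding admissible_def by blast
    ultimately have "y(i := z) \<in> Pi\<^sub>E I U"
      using U(3) by (auto simp: PiE_iff extensional_def)
    then show "z \<in> gen p i k"
      using U(4) that unfolding shadow_def by fastforce
  qed
  define N where "N i = (if i \<in> supp p then depth p else 0)" for i
  define g where "g = (\<lambda>i\<in>I. \<lambda>k. if k < N i then gen p i k else U i)"
  define q where "q = \<lparr>gen = g, supp = supp p \<union> {i \<in> I. U i \<noteq> topspace (X i)}, depth = Suc (depth p)\<rparr>"
  have "g i \<in> krom_carrier (X i)" if "i \<in> I" for i
  proof -
    have "gen p i \<in> krom_carrier (X i)"
      using p that unfolding admissible_def by (simp add: PiE_iff)
    moreover have "y i \<in> U i"
      using U(3) that by (simp add: PiE_iff)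
    ultimately show ?thesis
      using krom_carrier_truncate[of "gen p i" "X i" "U i" "y i" "N i"] U(2) U_sub that
      unfolding g_def N_def by (simp split: if_splits)
  qed
  then have "admissible q"
    using p U(1) unfolding admissible_def q_def g_def by (auto simp: PiE_iff)
  moreover have "refines q p"
    using p unfolding refines_def q_def g_def N_def admissible_def by auto
  moreover have "shadow q \<subseteq> Pi\<^sub>E I U"
  proof
    fix z assume z: "z \<in> shadow q"
    have "z i \<in> U i" if "i \<in> I" for i
    proof (cases "U i = topspace (X i)")
      case True
      then show ?thesis
        using z that unfolding shadow_def by (auto simp: PiE_iff)
    next
      case False
      then have "z i \<in> g i (depth p)"
        using z that unfolding shadow_def q_def by auto
      moreover have "\<not> depth p < N i"
        unfolding N_def by simp
      ultimately show ?thesis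
        using that unfolding g_def by simp
    qed
    then show "z \<in> Pi\<^sub>E I U"
      using z unfolding shadow_def by (auto simp: PiE_iff)
  qed
  ultimately show ?thesis
    using that by blast
qed

lemma refine_into_open:
  assumes p: "admissible p"
    and W: "openin (product_topology X I) W" "W \<noteq> {}" "W \<subseteq> shadow p"
  obtains q where "admissible q" "refines q p" "shadow q \<subseteq> W"
proof -
  obtain y where "y \<in> W"
    using W(2) by blast
  then obtain U where U: "finite {i \<in> I. U i \<noteq> topspace (X i)}"
      "\<And>i. i \<in> I \<Longrightarrow> openin (X i) (U i)" "y \<in> Pi\<^sub>E I U" "Pi\<^sub>E I U \<subseteq> W"
    using W(1) unfolding openin_product_topology_alt by force
  moreover have "Pi\<^sub>E I U \<subseteq> shadow p"
    using U(4) W(3) by blast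
  ultimately obtain q where "admissible q" "refines q p" "shadow q \<subseteq> Pi\<^sub>E I U"
    using refine_into_box[OF p] by blast
  then show ?thesis
    using that U(4) by blast
qed

lemma admissible_shadow_subset_open:
  assumes "openin (product_topology X I) V" "V \<noteq> {}"
  obtains q where "admissible q" "shadow q \<subseteq> V"
proof -
  obtain y where y: "y \<in> topspace (product_topology X I)"
    using assms openin_subset by blast
  define p where "p = \<lparr>gen = \<lambda>i\<in>I. \<lambda>k. topspace (X i), supp = {}, depth = 0\<rparr>"
  have "(\<lambda>k. topspace (X i)) \<in> krom_carrier (X i)" if "i \<in> I" for i
    using y that by (intro krom_carrierI[where z = "y i"]) (auto simp: PiE_iff)
  then have "admissible p"
    unfolding admissible_def p_def by (simp add: PiE_iff)
  moreover have "shadow p = topspace (product_topology X I)"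
    unfolding shadow_def p_def by simp
  then have "V \<subseteq> shadow p"
    using openin_subset[OF assms(1)] by simp
  ultimately show ?thesis
    using refine_into_open assms that by blast
qed

lemma refine_into_open_and_dense:
  assumes p: "admissible p"
    and W: "openin (product_topology X I) W" "W \<noteq> {}" "W \<subseteq> shadow p"
    and E: "openin krom_product E" "krom_product closure_of E = topspace krom_product"
  obtains q where "admissible q" "refines q p" "cylinder q \<subseteq> E" "shadow q \<subseteq> W"
proof -
  obtain q1 where q1: "admissible q1" "refines q1 p" "shadow q1 \<subseteq> W"
    using refine_into_open[OF p W] .
  have "E \<inter> cylinder q1 \<noteq> {}"
    using E(2) openin_cylinder[OF q1(1)] gen_in_cylinder[OF q1(1)]
    unfolding dense_intersects_open by blast
  then obtain g where g: "g \<in> E" "g \<in> cylinder q1"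
    by blast
  obtain q2 where q2: "admissible q2" "gen q2 = g" "cylinder q2 \<subseteq> E"
    using cylinder_subset_openin[OF E(1) g(1)] .
  define q where "q = \<lparr>gen = g, supp = supp q1 \<union> supp q2, depth = max (depth q1) (depth q2)\<rparr>"
  have "admissible q"
    using q1(1) q2(1,2) unfolding admissible_def q_def by auto
  moreover have "refines q p"
    using q1(2) g(2) unfolding refines_def cylinder_def q_def by fastforce
  moreover have "cylinder q \<subseteq> E"
    using q2(2,3) unfolding cylinder_def q_def by auto
  moreover have "shadow q \<subseteq> shadow (q1\<lparr>gen := g\<rparr>)"
    unfolding shadow_def q_def by auto
  then have "shadow q \<subseteq> W"
    using q1(3) shadow_gen_update[OF g(2)] by blast
  ultimately show ?thesis
    using that by blast
qed

lemma refines_chain_limit: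
  assumes adm: "\<And>n. admissible (b n)" and chain: "\<And>n. refines (b (Suc n)) (b n)"
    and x: "\<And>n. x \<in> shadow (b n)"
  shows "chain_limit b \<in> topspace krom_product" "chain_limit b \<in> cylinder (b n)"
proof -
  have carrier: "gen (b n) i \<in> krom_carrier (X i)" if "i \<in> I" for n i
    using adm[of n] that unfolding admissible_def by (simp add: PiE_iff)
  have "chain_limit b i \<in> krom_carrier (X i)" if "i \<in> I" for i
  proof (cases "\<exists>m. i \<in> supp (b m)")
    case True
    then obtain m where m: "i \<in> supp (b m)"
      by blast
    show ?thesis
    proof (rule krom_carrierI)
      fix k
      obtain n where n: "i \<in> supp (b n)" "Suc k < depth (b n)"
        using refines_chain_deep[of b, OF chain m] by blast
      then have "chain_limit b i k = gen (b n) i k" "chain_limit b i (Suc k) = gen (b n) i (Suc k)"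
        using chain_limit_eq[of b, OF chain] by auto
      moreover have "x i \<in> gen (b n) i k"
        using x[of n] n unfolding shadow_def by auto
      ultimately show "openin (X i) (chain_limit b i k)" "chain_limit b i (Suc k) \<subseteq> chain_limit b i k"
        "x i \<in> chain_limit b i k"
        using carrier[OF that, of n] unfolding krom_carrier_def by auto
    qed
  next
    case False
    then show ?thesis
      using carrier[OF that] unfolding chain_limit_def by simp
  qed
  moreover have "chain_limit b i = undefined" if "i \<notin> I" for i
  proof -
    have "\<not> (\<exists>m. i \<in> supp (b m))" "gen (b 0) i = undefined"
      using adm that unfolding admissible_def by (auto simp: PiE_iff extensional_def)
    then show ?thesis
      unfolding chain_limit_def by simp
  qed
  ultimately show limit: "chain_limit b \<in> topspace krom_product"
    by (auto simp: PiE_iff extensional_def)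
  show "chain_limit b \<in> cylinder (b n)"
    using limit chain_limit_eq[of b, OF chain] unfolding cylinder_def by auto
qed

section \<open>The product is Baire if the Krom product is\<close>

definition lift :: "('i \<Rightarrow> 'a) set \<Rightarrow> ('i \<Rightarrow> nat \<Rightarrow> 'a set) set" where
  "lift D = {g. \<exists>q. admissible q \<and> gen q = g \<and> shadow q \<subseteq> D}"

lemma openin_lift: "openin krom_product (lift D)"
proof (subst openin_subopen, intro ballI)
  fix g assume "g \<in> lift D"
  then obtain q where q: "admissible q" "gen q = g" "shadow q \<subseteq> D"
    unfolding lift_def by blast
  have "cylinder q \<subseteq> lift D"
  proof
    fix f assume "f \<in> cylinder q"
    then have "admissible (q\<lparr>gen := f\<rparr>)" "shadow (q\<lparr>gen := f\<rparr>) \<subseteq> D"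
      using q admissible_gen_update shadow_gen_update by auto
    then show "f \<in> lift D"
      unfolding lift_def by (intro CollectI exI[of _ "q\<lparr>gen := f\<rparr>"]) simp
  qed
  then show "\<exists>T. openin krom_product T \<and> g \<in> T \<and> T \<subseteq> lift D"
    using openin_cylinder[OF q(1)] gen_in_cylinder[OF q(1)] q(2) by blast
qed

lemma dense_lift:
  assumes "openin (product_topology X I) D" "product_topology X I closure_of D = topspace (product_topology X I)"
  shows "krom_product closure_of (lift D) = topspace krom_product"
  unfolding dense_intersects_open
proof (intro allI impI)
  fix T assume T: "openin krom_product T \<and> T \<noteq> {}"
  then obtain q where q: "admissible q" "cylinder q \<subseteq> T"
    using cylinder_subset_openin by blast
  have "D \<inter> shadow q \<noteq> {}"
    using assms(2) openin_shadow[OF q(1)] shadow_nonempty[OF q(1)]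
    unfolding dense_intersects_open by blast
  then obtain q' where q': "admissible q'" "refines q' q" "shadow q' \<subseteq> D \<inter> shadow q"
    using refine_into_open[OF q(1), of "D \<inter> shadow q"] assms(1) openin_shadow[OF q(1)] by blast
  have "gen q' \<in> lift D"
    using q' unfolding lift_def by blast
  moreover have "gen q' \<in> cylinder q"
    using q'(1,2) unfolding admissible_def refines_def cylinder_def by auto
  ultimately show "lift D \<inter> T \<noteq> {}"
    using q(2) by blast
qed

lemma baire_space_of_krom_product:
  assumes "baire_space krom_product"
  shows "baire_space (product_topology X I)"
  unfolding baire_space_iff_open_meets_Inter
proof (intro allI impI)
  fix D :: "nat \<Rightarrow> ('i \<Rightarrow> 'a) set" and V
  assume D: "\<forall>n. openin (product_topology X I) (D n) \<and>
               product_topology X I closure_of D n = topspace (product_topology X I)"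
    and V: "openin (product_topology X I) V" "V \<noteq> {}"
  obtain q where q: "admissible q" "shadow q \<subseteq> V"
    using admissible_shadow_subset_open[OF V] .
  have "cylinder q \<inter> (\<Inter>n. lift (D n)) \<noteq> {}"
    using assms[unfolded baire_space_iff_open_meets_Inter, rule_format, of "\<lambda>n. lift (D n)" "cylinder q"]
      openin_lift dense_lift D openin_cylinder[OF q(1)] gen_in_cylinder[OF q(1)]
    by blast
  then obtain g where g: "g \<in> cylinder q" "\<And>n. g \<in> lift (D n)"
    by blast
  then have "g \<in> topspace krom_product"
    unfolding cylinder_def by blast
  then obtain x where x: "x \<in> topspace (product_topology X I)" "\<And>i k. i \<in> I \<Longrightarrow> x i \<in> g i k"
    using krom_product_point by blast
  have "x \<in> shadow (q\<lparr>gen := g\<rparr>)"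
    using shadowI[OF admissible_gen_update[OF q(1) g(1)]] x by simp
  then have "x \<in> V"
    using shadow_gen_update[OF g(1)] q(2) by blast
  moreover have "x \<in> D n" for n
  proof -
    obtain q' where "admissible q'" "gen q' = g" "shadow q' \<subseteq> D n"
      using g(2)[of n] unfolding lift_def by blast
    then show ?thesis
      using shadowI[of q' x] x by blast
  qed
  ultimately show "V \<inter> (\<Inter>n. D n) \<noteq> {}"
    by blast
qed

section \<open>The Krom product is Baire if the product is\<close>

context
  fixes E :: "nat \<Rightarrow> ('i \<Rightarrow> nat \<Rightarrow> 'a set) set"
begin

definition candidates :: "('i, 'a) condition \<Rightarrow> nat \<Rightarrow> ('i, 'a) condition set" where
  "candidates p n = {q. admissible q \<and> refines q p \<and> cylinder q \<subseteq> E n}"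

definition antichain :: "('i, 'a) condition \<Rightarrow> nat \<Rightarrow> ('i, 'a) condition set" where
  "antichain p n = (SOME M. M \<subseteq> candidates p n \<and> disjoint_family_on shadow M \<and>
     (\<forall>q\<in>candidates p n. shadow q \<noteq> {} \<longrightarrow> (\<exists>m\<in>M. shadow q \<inter> shadow m \<noteq> {})))"

lemma antichain:
  shows antichain_subset: "antichain p n \<subseteq> candidates p n"
    and disjoint_antichain: "disjoint_family_on shadow (antichain p n)"
    and antichain_maximal: "q \<in> candidates p n \<Longrightarrow> \<exists>m\<in>antichain p n. shadow q \<inter> shadow m \<noteq> {}"
proof -
  note maximal = someI_ex[OF exists_maximal_disjoint_subfamily[of "candidates p n" shadow],
      folded antichain_def]
  show "antichain p n \<subseteq> candidates p n" "disjoint_family_on shadow (antichain p n)"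
    using maximal by blast+
  show "\<exists>m\<in>antichain p n. shadow q \<inter> shadow m \<noteq> {}" if "q \<in> candidates p n"
    using maximal that shadow_nonempty unfolding candidates_def by blast
qed

primrec level :: "('i, 'a) condition \<Rightarrow> nat \<Rightarrow> ('i, 'a) condition set" where
  "level q0 0 = {q0}"
| "level q0 (Suc n) = (\<Union>p\<in>level q0 n. antichain p n)"

lemma level_admissible: "admissible q0 \<Longrightarrow> q \<in> level q0 n \<Longrightarrow> admissible q"
  by (induction n arbitrary: q) (use antichain_subset in \<open>auto simp: candidates_def\<close>)

lemma disjoint_level: "disjoint_family_on shadow (level q0 n)"
proof (induction n)
  case (Suc n)
  show ?case
    unfolding disjoint_family_on_def
  proof (intro ballI impI)
    fix a b assume "a \<in> level q0 (Suc n)" "b \<in> level q0 (Suc n)" "a \<noteq> b"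
    then obtain pa pb where p: "pa \<in> level q0 n" "pb \<in> level q0 n" "a \<in> antichain pa n" "b \<in> antichain pb n"
      by auto
    show "shadow a \<inter> shadow b = {}"
    proof (cases "pa = pb")
      case True
      then show ?thesis
        using disjoint_antichain p \<open>a \<noteq> b\<close> unfolding disjoint_family_on_def by blast
    next
      case False
      have "shadow a \<subseteq> shadow pa" "shadow b \<subseteq> shadow pb"
        using p antichain_subset shadow_refines unfolding candidates_def by blast+
      then show ?thesis
        using Suc p False unfolding disjoint_family_on_def by blast
    qed
  qed
qed (simp add: disjoint_family_on_def)

lemma level_Suc_candidate:
  assumes "q \<in> level q0 (Suc n)" "p \<in> level q0 n" "x \<in> shadow q" "x \<in> shadow p"
  shows "q \<in> candidates p n"
proof -
  obtain p' where p': "p' \<in> level q0 n" "q \<in> antichain p' n"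
    using assms(1) by auto
  then have "q \<in> candidates p' n"
    using antichain_subset by blast
  then have "x \<in> shadow p'"
    using assms(3) shadow_refines unfolding candidates_def by blast
  then have "p' = p"
    using disjoint_level p'(1) assms(2,4) unfolding disjoint_family_on_def by blast
  then show ?thesis
    using \<open>q \<in> candidates p' n\<close> by simp
qed

lemma level_dense:
  assumes E: "\<And>n. openin krom_product (E n)" "\<And>n. krom_product closure_of E n = topspace krom_product"
    and q0: "admissible q0"
    and W: "openin (product_topology X I) W" "W \<noteq> {}" "W \<subseteq> shadow q0"
  shows "\<exists>q\<in>level q0 n. W \<inter> shadow q \<noteq> {}"
proof (induction n)
  case 0
  then show ?case
    using W(2,3) by auto
next
  case (Suc n)
  then obtain p where p: "p \<in> level q0 n" "W \<inter> shadow p \<noteq> {}"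
    by blast
  have "admissible p"
    using level_admissible[OF q0 p(1)] .
  then obtain q where q: "admissible q" "refines q p" "cylinder q \<subseteq> E n" "shadow q \<subseteq> W \<inter> shadow p"
    using refine_into_open_and_dense[of p "W \<inter> shadow p" "E n"] W(1) p(2) openin_shadow E by blast
  then have "q \<in> candidates p n"
    unfolding candidates_def by blast
  then obtain m where "m \<in> antichain p n" "shadow q \<inter> shadow m \<noteq> {}"
    using antichain_maximal by blast
  then show ?case
    using p(1) q(4) by fastforce
qed

lemma cylinder_meets_Inter_dense:
  assumes Y: "baire_space (product_topology X I)"
    and E: "\<And>n. openin krom_product (E n)" "\<And>n. krom_product closure_of E n = topspace krom_product"
    and q0: "admissible q0"
  shows "cylinder q0 \<inter> (\<Inter>n. E n) \<noteq> {}"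
proof -
  have "shadow q0 \<inter> (\<Inter>n. \<Union>(shadow ` level q0 n)) \<noteq> {}"
  proof (rule baire_space_meets_Inter_dense_in_open[OF Y openin_shadow[OF q0] shadow_nonempty[OF q0]])
    show "openin (product_topology X I) (\<Union>(shadow ` level q0 n))" for n
      using openin_shadow level_admissible[OF q0] by blast
    show "W \<inter> \<Union>(shadow ` level q0 n) \<noteq> {}"
      if "openin (product_topology X I) W" "W \<noteq> {}" "W \<subseteq> shadow q0" for n W
      using level_dense[OF E q0 that] by blast
  qed
  then obtain x where "x \<in> (\<Inter>n. \<Union>(shadow ` level q0 n))"
    by blast
  then have "\<forall>n. \<exists>q. q \<in> level q0 n \<and> x \<in> shadow q"
    by blast
  then obtain b where b: "\<And>n. b n \<in> level q0 n" "\<And>n. x \<in> shadow (b n)"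
    by (metis choice)
  have "b (Suc n) \<in> candidates (b n) n" for n
    using level_Suc_candidate b by blast
  then have "refines (b (Suc n)) (b n)" "cylinder (b (Suc n)) \<subseteq> E n" for n
    unfolding candidates_def by blast+
  moreover have "admissible (b n)" for n
    using level_admissible[OF q0 b(1)] .
  ultimately have limit: "chain_limit b \<in> cylinder (b n)" for n
    using refines_chain_limit(2) b(2) by blast
  have "b 0 = q0"
    using b(1)[of 0] by simp
  then have "chain_limit b \<in> cylinder q0"
    using limit[of 0] by simp
  moreover have "chain_limit b \<in> E n" for n
    using limit[of "Suc n"] \<open>\<And>n. cylinder (b (Suc n)) \<subseteq> E n\<close> by blast
  ultimately show ?thesis
    by blast
qed

end

lemma baire_space_krom_product:
  assumes "baire_space (product_topology X I)"
  shows "baire_space krom_product"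
  unfolding baire_space_iff_open_meets_Inter
proof (intro allI impI)
  fix E :: "nat \<Rightarrow> ('i \<Rightarrow> nat \<Rightarrow> 'a set) set" and V
  assume E: "\<forall>n. openin krom_product (E n) \<and> krom_product closure_of E n = topspace krom_product"
    and V: "openin krom_product V" "V \<noteq> {}"
  then obtain q where "admissible q" "cylinder q \<subseteq> V"
    using cylinder_subset_openin by blast
  then show "V \<inter> (\<Inter>n. E n) \<noteq> {}"
    using cylinder_meets_Inter_dense[OF assms] E by blast
qed

end

theorem theorem4p1:
  fixes X :: "'i \<Rightarrow> 'a topology" and I :: "'i set"
  shows "baire_space (product_topology X I) \<longleftrightarrow>
         baire_space (product_topology (\<lambda>i. krom_space (X i)) I)"
  using baire_space_of_krom_product baire_space_krom_product by blast

end
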